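(* Let $N\ge 2$ and let $A=J-I$ be the adjacency matrix of the complete graph $K_N$. For integers $k\ge1$, $m\ge1$ define $$\mathcal A[k,m]=\sum_{\substack{j_1+\cdots+j_k=m\\ j_i\ge1}}\ \prod_{i=1}^k (A^{j_i})_{11}.$$ Then for every $x\in(0,1)$, $$|\mathcal A[k,m]|\le \frac{(N-1)^m}{(N-1-x)^k}\,\frac{x^{2k-m}}{(1-x)^k};$$ in particular $|\mathcal A[k,m]|\le 2^{m-k}\frac{(N-1)^m}{(N-\frac32)^k}$, and, if $m>2k$, $$|\mathcal A[k,m]|\le\frac{(N-1)^m}{\left(N-1-\frac{m-2k}{m-k}\right)^k}\,\frac{(m-k)^{m-k}}{(m-2k)^{m-2k}k^k}.$$
   Context: $(A^{j})_{11}$ is the number of closed walks of length $j$ starting and ending at node $1$. *)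

theory Defs
  imports Complex_Main "Jordan_Normal_Form.Matrix"
begin

text \<open>Adjacency matrix J - I of the complete graph K_N (vertices 0..N-1; paper's node 1 is index 0).\<close>
definition K_adj :: "nat \<Rightarrow> int mat" where
  "K_adj N = mat N N (\<lambda>(i,j). if i = j then 0 else 1)"

definition walk11 :: "nat \<Rightarrow> nat \<Rightarrow> int" where
  "walk11 N j = (K_adj N ^\<^sub>m j) $$ (0,0)"

definition compositions :: "nat \<Rightarrow> nat \<Rightarrow> nat list set" where
  "compositions k m = {js. length js = k \<and> (\<forall>j\<in>set js. 1 \<le> j) \<and> sum_list js = m}"

definition calA :: "nat \<Rightarrow> nat \<Rightarrow> nat \<Rightarrow> int" where
  "calA N k m = (\<Sum>js\<in>compositions k m. \<Prod>j\<leftarrow>js. walk11 N j)"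

end

theory Submission
  imports Defs
begin

text \<open>
  Write \<open>n = N - 1\<close> and \<open>c\<^sub>j = (A\<^sup>j)\<^sub>1\<^sub>1\<close>. Every power of \<open>A = J - I\<close> has a constant
  diagonal \<open>d\<close> and a constant off-diagonal \<open>e\<close>, both nonnegative, with \<open>d + n e = n\<^sup>j\<close>
  (row sums); as \<open>c\<^sub>j\<^sub>+\<^sub>1 = n e\<close>, this gives \<open>c\<^sub>1 = 0\<close> and \<open>0 \<le> c\<^sub>j\<^sub>+\<^sub>1 \<le> n\<^sup>j\<close>.
  With \<open>r = x / n\<close>, Rankin's trick gives
  \<open>r\<^sup>m \<A>[k,m] \<le> (\<Sum>\<^sub>j c\<^sub>j r\<^sup>j)\<^sup>k \<le> (\<Sum>\<^sub>j\<^sub>\<ge>\<^sub>2 x\<^sup>j / n)\<^sup>k \<le> (x\<^sup>2 / (n (1 - x)))\<^sup>k\<close>,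
  since dropping the constraint \<open>j\<^sub>1 + \<dots> + j\<^sub>k = m\<close> only adds nonnegative terms.
  This bound, with \<open>n\<^sup>k\<close> in place of \<open>(n - x)\<^sup>k\<close>, is slightly stronger than the first claim;
  the other two are its instances \<open>x = 1/2\<close> and \<open>x = (m - 2k)/(m - k)\<close>.
\<close>

definition diag_offdiag_mat :: "nat \<Rightarrow> 'a \<Rightarrow> 'a \<Rightarrow> 'a mat" where
  "diag_offdiag_mat n d e = mat n n (\<lambda>(i, l). if i = l then d else e)"

lemma sum_diag_offdiag_row_times_K_adj_col:
  fixes d e :: int
  assumes "i < N" "l < N"
  shows "(\<Sum>t = 0..<N. (if i = t then d else e) * (if t = l then 0 else 1))
        = (if i = l then (int N - 1) * e else d + (int N - 2) * e)"
proof (cases "i = l")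
  case True
  have "(\<Sum>t = 0..<N. (if i = t then d else e) * (if t = l then 0 else 1))
      = (\<Sum>t\<in>{0..<N} - {l}. e)"
    using assms True by (subst sum.remove[of _ l]) auto
  also have "\<dots> = (int N - 1) * e" using assms by (simp add: of_nat_diff)
  finally show ?thesis using True by simp
next
  case False
  have "(\<Sum>t = 0..<N. (if i = t then d else e) * (if t = l then 0 else 1))
      = (\<Sum>t\<in>{0..<N} - {l}. if i = t then d else e)"
    using assms by (subst sum.remove[of _ l]) auto
  also have "\<dots> = d + (\<Sum>t\<in>{0..<N} - {l} - {i}. e)"
    using assms False by (subst sum.remove[of _ i]) auto
  also have "\<dots> = d + (int N - 2) * e"
    using assms False by (simp add: card_Diff_subset of_nat_diff)
  finally show ?thesis using False by simp
qed

lemma diag_offdiag_mat_mult_K_adj: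
  fixes d e :: int
  shows "diag_offdiag_mat N d e * K_adj N
       = diag_offdiag_mat N ((int N - 1) * e) (d + (int N - 2) * e)"
proof (rule eq_matI)
  fix i l
  assume "i < dim_row (diag_offdiag_mat N ((int N - 1) * e) (d + (int N - 2) * e))"
    and "l < dim_col (diag_offdiag_mat N ((int N - 1) * e) (d + (int N - 2) * e))"
  then have il: "i < N" "l < N" by (auto simp: diag_offdiag_mat_def)
  have "(diag_offdiag_mat N d e * K_adj N) $$ (i, l)
      = (\<Sum>t = 0..<N. (if i = t then d else e) * (if t = l then 0 else 1))"
    using il by (auto simp: diag_offdiag_mat_def K_adj_def scalar_prod_def intro!: sum.cong)
  also have "\<dots> = diag_offdiag_mat N ((int N - 1) * e) (d + (int N - 2) * e) $$ (i, l)"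
    using il by (simp add: sum_diag_offdiag_row_times_K_adj_col diag_offdiag_mat_def)
  finally show "(diag_offdiag_mat N d e * K_adj N) $$ (i, l)
      = diag_offdiag_mat N ((int N - 1) * e) (d + (int N - 2) * e) $$ (i, l)" .
qed (auto simp: diag_offdiag_mat_def K_adj_def)

lemma K_adj_power_eq_diag_offdiag_mat:
  assumes "N \<ge> 2"
  shows "\<exists>d e. K_adj N ^\<^sub>m j = diag_offdiag_mat N d e \<and> 0 \<le> d \<and> 0 \<le> e
                \<and> d + (int N - 1) * e = (int N - 1) ^ j"
proof (induction j)
  case 0
  have "K_adj N ^\<^sub>m 0 = diag_offdiag_mat N 1 0"
    by (auto simp: K_adj_def diag_offdiag_mat_def one_mat_def)
  then show ?case by (intro exI[of _ 1] exI[of _ 0]) simp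
next
  case (Suc j)
  then obtain d e where de: "K_adj N ^\<^sub>m j = diag_offdiag_mat N d e" "0 \<le> d" "0 \<le> e"
    "d + (int N - 1) * e = (int N - 1) ^ j" by blast
  have "K_adj N ^\<^sub>m Suc j = diag_offdiag_mat N ((int N - 1) * e) (d + (int N - 2) * e)"
    using de(1) by (simp add: diag_offdiag_mat_mult_K_adj)
  moreover have "(int N - 1) * e + (int N - 1) * (d + (int N - 2) * e) = (int N - 1) ^ Suc j"
    using de(4) by (simp add: algebra_simps)
  ultimately show ?case using assms de(2,3) by (intro exI conjI) auto
qed

lemma walk11_one: "N \<ge> 1 \<Longrightarrow> walk11 N 1 = 0"
  by (simp add: walk11_def K_adj_def)

lemma walk11_nonneg:
  assumes "N \<ge> 2"
  shows "0 \<le> walk11 N j"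
  using K_adj_power_eq_diag_offdiag_mat[OF assms, of j] assms
  by (auto simp: walk11_def diag_offdiag_mat_def)

lemma walk11_Suc_le:
  assumes "N \<ge> 2"
  shows "walk11 N (Suc j) \<le> (int N - 1) ^ j"
proof -
  obtain d e where de: "K_adj N ^\<^sub>m j = diag_offdiag_mat N d e" "0 \<le> d"
    "d + (int N - 1) * e = (int N - 1) ^ j"
    using K_adj_power_eq_diag_offdiag_mat[OF assms] by blast
  then have "K_adj N ^\<^sub>m Suc j = diag_offdiag_mat N ((int N - 1) * e) (d + (int N - 2) * e)"
    by (simp add: diag_offdiag_mat_mult_K_adj)
  then have "walk11 N (Suc j) = (int N - 1) * e"
    using assms by (simp add: walk11_def diag_offdiag_mat_def)
  then show ?thesis using de(2,3) by linarith
qed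

lemma sum_prod_list_lists_length:
  fixes f :: "'a \<Rightarrow> 'b::comm_semiring_1"
  shows "(\<Sum>xs\<in>{xs. set xs \<subseteq> D \<and> length xs = k}. \<Prod>x\<leftarrow>xs. f x) = sum f D ^ k"
proof (induction k)
  case 0
  have "{xs. set xs \<subseteq> D \<and> length xs = 0} = {[]}" by auto
  then show ?case by simp
next
  case (Suc k)
  have "inj_on (\<lambda>(xs, x). x # xs) ({xs. set xs \<subseteq> D \<and> length xs = k} \<times> D)"
    by (auto simp: inj_on_def)
  then have "(\<Sum>xs\<in>{xs. set xs \<subseteq> D \<and> length xs = Suc k}. \<Prod>x\<leftarrow>xs. f x)
      = (\<Sum>(xs, x)\<in>{xs. set xs \<subseteq> D \<and> length xs = k} \<times> D. f x * (\<Prod>y\<leftarrow>xs. f y))"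
    unfolding lists_length_Suc_eq by (subst sum.reindex) (simp_all add: case_prod_beta)
  also have "\<dots> = (\<Sum>xs\<in>{xs. set xs \<subseteq> D \<and> length xs = k}. \<Prod>y\<leftarrow>xs. f y) * sum f D"
    by (simp add: sum.cartesian_product[symmetric] sum_distrib_left sum_distrib_right mult.commute)
  finally show ?case using Suc by (simp add: mult.commute)
qed

lemma prod_list_map_mult_power:
  fixes c :: "nat \<Rightarrow> 'a::comm_monoid_mult"
  shows "(\<Prod>j\<leftarrow>js. c j * r ^ j) = (\<Prod>j\<leftarrow>js. c j) * r ^ sum_list js"
  by (induction js) (simp_all add: power_add ac_simps)

lemma compositions_subset_lists: "compositions k m \<subseteq> {js. set js \<subseteq> {1..m} \<and> length js = k}"
  using member_le_sum_list by (fastforce simp: compositions_def)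

lemma compositions_weighted_sum_le:
  fixes c :: "nat \<Rightarrow> 'a::linordered_semidom"
  assumes "\<And>j. 0 \<le> c j" and "0 \<le> r"
  shows "r ^ m * (\<Sum>js\<in>compositions k m. \<Prod>j\<leftarrow>js. c j) \<le> (\<Sum>j = 1..m. c j * r ^ j) ^ k"
proof -
  have "r ^ m * (\<Sum>js\<in>compositions k m. \<Prod>j\<leftarrow>js. c j)
      = (\<Sum>js\<in>compositions k m. \<Prod>j\<leftarrow>js. c j * r ^ j)"
    unfolding sum_distrib_left prod_list_map_mult_power
    by (intro sum.cong refl) (simp add: compositions_def mult.commute)
  also have "\<dots> \<le> (\<Sum>js\<in>{js. set js \<subseteq> {1..m} \<and> length js = k}. \<Prod>j\<leftarrow>js. c j * r ^ j)"
    using assms compositions_subset_lists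
    by (intro sum_mono2 finite_lists_length_eq) (auto intro!: prod_list_nonneg)
  also have "\<dots> = (\<Sum>j = 1..m. c j * r ^ j) ^ k"
    by (rule sum_prod_list_lists_length)
  finally show ?thesis .
qed

lemma sum_geometric_from_2_le:
  fixes x :: real
  assumes "0 \<le> x" "x < 1"
  shows "(\<Sum>j = 2..m. x ^ j) \<le> x\<^sup>2 / (1 - x)"
proof (cases "m < 2")
  case False
  then have "(\<Sum>j = 2..m. x ^ j) = (x\<^sup>2 - x ^ Suc m) / (1 - x)"
    using assms by (subst sum_gp) auto
  also have "\<dots> \<le> x\<^sup>2 / (1 - x)" using assms by (intro divide_right_mono) auto
  finally show ?thesis .
qed (use assms in simp)

lemma sum_weighted_powers_le:
  fixes c :: "nat \<Rightarrow> real" and n x :: real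
  assumes c1: "c 1 = 0" and c_Suc: "\<And>j. c (Suc j) \<le> n ^ j"
    and "0 < n" "0 < x" "x < 1"
  shows "(\<Sum>j = 1..m. c j * (x / n) ^ j) \<le> x\<^sup>2 / (n * (1 - x))"
proof (cases "m = 0")
  case False
  have term_le: "c j * (x / n) ^ j \<le> x ^ j / n" if "j \<ge> 1" for j
  proof -
    obtain i where j: "j = Suc i" using \<open>j \<ge> 1\<close> by (cases j) auto
    have "c j * (x / n) ^ j \<le> n ^ i * (x / n) ^ j"
      using c_Suc[of i] assms j by (intro mult_right_mono) auto
    also have "\<dots> = x ^ j / n" using assms by (simp add: j power_divide)
    finally show ?thesis .
  qed
  have "(\<Sum>j = 1..m. c j * (x / n) ^ j) = (\<Sum>j = 2..m. c j * (x / n) ^ j)"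
    using False c1 by (simp add: sum.atLeast_Suc_atMost numeral_2_eq_2)
  also have "\<dots> \<le> (\<Sum>j = 2..m. x ^ j / n)" by (intro sum_mono term_le) auto
  also have "\<dots> = (\<Sum>j = 2..m. x ^ j) / n" by (simp add: sum_divide_distrib)
  also have "\<dots> \<le> x\<^sup>2 / (1 - x) / n"
    using assms sum_geometric_from_2_le by (intro divide_right_mono) auto
  finally show ?thesis by (simp add: mult.commute)
qed (use assms in simp)

lemma compositions_sum_le:
  fixes c :: "nat \<Rightarrow> real" and n x :: real
  assumes "\<And>j. 0 \<le> c j" and "c 1 = 0" and "\<And>j. c (Suc j) \<le> n ^ j"
    and "0 < n" "0 < x" "x < 1"
  shows "(\<Sum>js\<in>compositions k m. \<Prod>j\<leftarrow>js. c j)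
       \<le> n ^ m / n ^ k * (x powr (2 * real k - real m) / (1 - x) ^ k)"
proof -
  let ?S = "\<Sum>js\<in>compositions k m. \<Prod>j\<leftarrow>js. c j"
  have "(x / n) ^ m * ?S \<le> (\<Sum>j = 1..m. c j * (x / n) ^ j) ^ k"
    using assms by (intro compositions_weighted_sum_le) auto
  also have "\<dots> \<le> (x\<^sup>2 / (n * (1 - x))) ^ k"
  proof (rule power_mono)
    show "(\<Sum>j = 1..m. c j * (x / n) ^ j) \<le> x\<^sup>2 / (n * (1 - x))"
      using assms by (intro sum_weighted_powers_le) auto
    show "0 \<le> (\<Sum>j = 1..m. c j * (x / n) ^ j)"
      using assms by (intro sum_nonneg mult_nonneg_nonneg) auto
  qed
  finally have "?S \<le> (x\<^sup>2 / (n * (1 - x))) ^ k / (x / n) ^ m"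
    using assms by (simp add: pos_le_divide_eq mult.commute)
  also have "\<dots> = n ^ m / n ^ k * ((x\<^sup>2) ^ k / x ^ m / (1 - x) ^ k)"
    by (simp add: power_divide power_mult_distrib) (simp add: ac_simps)
  also have "(x\<^sup>2) ^ k / x ^ m = x powr (2 * real k - real m)"
  proof -
    have "x powr (2 * real k - real m) = x ^ (2 * k) / x ^ m"
      using assms by (simp add: powr_diff powr_realpow[symmetric])
    then show ?thesis by (simp add: power_mult)
  qed
  finally show ?thesis .
qed

lemma abs_calA_le:
  fixes x :: real
  assumes "N \<ge> 2" and "0 < x" "x < 1"
  shows "\<bar>real_of_int (calA N k m)\<bar>
       \<le> (real N - 1) ^ m / (real N - 1 - x) ^ k * (x powr (2 * real k - real m) / (1 - x) ^ k)"
proof -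
  define c where "c j = real_of_int (walk11 N j)" for j
  define P where "P = x powr (2 * real k - real m) / (1 - x) ^ k"
  have c_nonneg: "0 \<le> c j" for j using walk11_nonneg[OF assms(1)] by (simp add: c_def)
  have c_Suc: "c (Suc j) \<le> (real N - 1) ^ j" for j
  proof -
    have "c (Suc j) \<le> real_of_int ((int N - 1) ^ j)"
      unfolding c_def of_int_le_iff by (rule walk11_Suc_le[OF assms(1)])
    then show ?thesis by simp
  qed
  have "real_of_int (calA N k m) = (\<Sum>js\<in>compositions k m. \<Prod>j\<leftarrow>js. c j)"
    by (simp add: calA_def of_int_hom.hom_prod_list c_def comp_def)
  moreover have "0 \<le> (\<Sum>js\<in>compositions k m. \<Prod>j\<leftarrow>js. c j)"
    using c_nonneg by (intro sum_nonneg prod_list_nonneg) auto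
  ultimately have "\<bar>real_of_int (calA N k m)\<bar> = (\<Sum>js\<in>compositions k m. \<Prod>j\<leftarrow>js. c j)"
    by simp
  also have "\<dots> \<le> (real N - 1) ^ m / (real N - 1) ^ k * P"
    unfolding P_def using assms c_nonneg c_Suc walk11_one[of N]
    by (intro compositions_sum_le) (auto simp: c_def)
  also have "\<dots> \<le> (real N - 1) ^ m / (real N - 1 - x) ^ k * P"
  proof (rule mult_right_mono)
    have "(real N - 1 - x) ^ k \<le> (real N - 1) ^ k"
      using assms by (intro power_mono) auto
    then show "(real N - 1) ^ m / (real N - 1) ^ k \<le> (real N - 1) ^ m / (real N - 1 - x) ^ k"
      using assms by (intro divide_left_mono) auto
    show "0 \<le> P" using assms by (simp add: P_def)
  qed
  finally show ?thesis unfolding P_def .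
qed

lemma abs_calA_le_half:
  assumes "N \<ge> 2"
  shows "\<bar>real_of_int (calA N k m)\<bar> \<le> 2 powr (real m - real k) * (real N - 1) ^ m / (real N - 3/2) ^ k"
proof -
  have "(1/2::real) powr (2 * real k - real m) = 2 powr (real m - 2 * real k)"
    by (simp add: powr_divide powr_minus_divide[symmetric])
  moreover have "(1 - 1/2::real) ^ k = 1 / 2 powr real k"
    by (simp add: powr_realpow power_divide)
  ultimately have "(1/2::real) powr (2 * real k - real m) / (1 - 1/2) ^ k = 2 powr (real m - real k)"
    by (simp add: powr_add[symmetric])
  then show ?thesis
    using abs_calA_le[OF assms, of "1/2" k m] by (simp add: ac_simps)
qed

lemma abs_calA_le_optimal:
  assumes "N \<ge> 2" and "k \<ge> 1" and "m > 2 * k"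
  shows "\<bar>real_of_int (calA N k m)\<bar>
       \<le> (real N - 1) ^ m / (real N - 1 - (real m - 2 * real k) / (real m - real k)) ^ k
          * ((real m - real k) ^ (m - k) / ((real m - 2 * real k) ^ (m - 2 * k) * real k ^ k))"
proof -
  define a where "a = real m - real k"
  define b where "b = real m - 2 * real k"
  have ab: "0 < b" "b < a" "a - b = real k" using assms(2,3) by (auto simp: a_def b_def)
  have "2 * real k - real m = - real (m - 2 * k)"
    using assms(3) by (simp add: of_nat_diff)
  then have "(b / a) powr (2 * real k - real m) = 1 / (b / a) powr real (m - 2 * k)"
    by (simp only: powr_minus_divide)
  also have "(b / a) powr real (m - 2 * k) = (b / a) ^ (m - 2 * k)"
    using ab by (intro powr_realpow) simp
  finally have powr_eq: "(b / a) powr (2 * real k - real m) = a ^ (m - 2 * k) / b ^ (m - 2 * k)"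
    by (simp add: power_divide)
  have "1 - b / a = real k / a"
    using ab by (simp add: field_simps)
  then have power_eq: "(1 - b / a) ^ k = real k ^ k / a ^ k"
    by (simp add: power_divide)
  have split_eq: "a ^ (m - k) = a ^ (m - 2 * k) * a ^ k"
    using assms(3) by (simp add: power_add[symmetric])
  have identity: "(b / a) powr (2 * real k - real m) / (1 - b / a) ^ k
      = a ^ (m - k) / (b ^ (m - 2 * k) * real k ^ k)"
    unfolding powr_eq power_eq split_eq by (simp add: divide_divide_times_eq)
  have "0 < b / a" "b / a < 1" using ab by auto
  from abs_calA_le[OF assms(1) this, of k m] show ?thesis
    unfolding identity unfolding a_def b_def .
qed

theorem mainTheorem3:
  fixes N k m :: nat
  assumes "N \<ge> 2" and "k \<ge> 1" and "m \<ge> 1"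
  shows "(\<forall>x::real. 0 < x \<and> x < 1 \<longrightarrow>
           \<bar>real_of_int (calA N k m)\<bar>
             \<le> (real N - 1) ^ m / (real N - 1 - x) ^ k
                * (x powr (2 * real k - real m) / (1 - x) ^ k))
       \<and> \<bar>real_of_int (calA N k m)\<bar>
             \<le> 2 powr (real m - real k) * (real N - 1) ^ m / (real N - 3/2) ^ k
       \<and> (m > 2 * k \<longrightarrow>
           \<bar>real_of_int (calA N k m)\<bar>
             \<le> (real N - 1) ^ m / (real N - 1 - (real m - 2 * real k) / (real m - real k)) ^ k
                * ((real m - real k) ^ (m - k) / ((real m - 2 * real k) ^ (m - 2 * k) * real k ^ k)))"
  using abs_calA_le[OF assms(1)] abs_calA_le_half[OF assms(1)] abs_calA_le_optimal[OF assms(1,2)]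
  by blast

end
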